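(* Let $N\ge 1$ be an integer, $\rho,\alpha,q\in[0,1]$, and $(r_n)_{n\ge0}$ with $0\le r_n<1$. Let $Z_n(i)\in[0,1]$ ($i=1,\dots,N$, $n\ge 0$) evolve by $Z_{n+1}(i)=(1-r_n)Z_n(i)+r_n(\rho I_{n+1}(i)+(1-\rho)q)$, where, with $\mathcal F_n=\sigma(Z_k(i):\,1\le i\le N,\ 0\le k\le n)$ and $Z_n=\frac1N\sum_{i=1}^N Z_n(i)$, the $I_{n+1}(1),\dots,I_{n+1}(N)\in\{0,1\}$ are conditionally independent given $\mathcal F_n$ with $P(I_{n+1}(i)=1\mid\mathcal F_n)=(1-\alpha)Z_n(i)+\alpha Z_n$. Suppose $\sum_n r_n=+\infty$, $\sum_n r_n^2<+\infty$ and $\rho(1-\alpha)<1$. Then for every $i\in\{1,\dots,N\}$, $Z_n(i)-Z_n\to0$ almost surely. In particular, if $Z$ is the almost sure limit of $Z_n$, then $Z_n(i)\to Z$ almost surely for every $i$.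
   Context: The paper's standing assumption on the initial condition (permutation invariant law, $E[Z_0(i)]=1/2$, $E[Z_0(1-Z_0)]>0$) may also be imposed but is not needed for this result. *)

theory Defs
  imports "HOL-Probability.Probability"
begin

definition nat_filtr :: "'a measure \<Rightarrow> nat \<Rightarrow> (nat \<Rightarrow> nat \<Rightarrow> 'a \<Rightarrow> real) \<Rightarrow> nat \<Rightarrow> 'a measure" where
  "nat_filtr M N Z n = sigma (space M)
     {Z k i -` B \<inter> space M | k i B. k \<le> n \<and> i \<in> {1..N} \<and> B \<in> sets borel}"

definition cond_prob_given :: "'a measure \<Rightarrow> 'a measure \<Rightarrow> 'a set \<Rightarrow> 'a \<Rightarrow> real" where
  "cond_prob_given M F A = real_cond_exp M F (indicator A)"

definition cond_indep_vars :: "'a measure \<Rightarrow> 'a measure \<Rightarrow> 'i set \<Rightarrow> ('i \<Rightarrow> 'a \<Rightarrow> real) \<Rightarrow> bool" where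
  "cond_indep_vars M F S X \<longleftrightarrow>
     (\<forall>B. (\<forall>i\<in>S. B i \<in> sets borel) \<longrightarrow>
        (AE w in M. cond_prob_given M F (\<Inter>i\<in>S. X i -` B i \<inter> space M) w
                   = (\<Prod>i\<in>S. cond_prob_given M F (X i -` B i \<inter> space M) w)))"

end

(*
  Fix an agent i and put D n = Z n i - Zbar n. Averaging the recursion over the agents gives
  D (n+1) = (1 - c r n) D n + x n with c = 1 - \<rho> (1 - \<alpha>) > 0 and
  x n = r n \<rho> (h n i - mean of the h n j), where h n j = I (n+1) j - P(I (n+1) j = 1 | F n)
  are the innovations. So x n is a martingale difference bounded by 2 r n; as the r n are square
  summable, Kolmogorov's maximal inequality makes the series of the x n converge almost surely.
  A deterministic lemma then gives D n \<longrightarrow> 0, because the sum of the c r n diverges.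
*)
theory Submission
  imports Defs
begin

lemma contraction_le_exp_sum:
  fixes h a :: "nat \<Rightarrow> real"
  assumes nonneg: "\<And>n. 0 \<le> h n"
    and step: "\<And>n. n \<ge> n0 \<Longrightarrow> h (Suc n) \<le> (1 - a n) * h n"
    and "n0 \<le> n"
  shows "h n \<le> h n0 * exp (- (\<Sum>k\<in>{n0..<n}. a k))"
  using \<open>n0 \<le> n\<close>
proof (induction n rule: dec_induct)
  case base then show ?case by simp
next
  case (step n)
  have "h (Suc n) \<le> (1 - a n) * h n"
    using assms(2)[OF step(1)] .
  also have "\<dots> \<le> exp (- a n) * h n"
    using exp_ge_add_one_self[of "- a n"] nonneg[of n] by (intro mult_right_mono) simp_all
  also have "\<dots> \<le> exp (- a n) * (h n0 * exp (- (\<Sum>k\<in>{n0..<n}. a k)))"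
    using step.IH by simp
  also have "\<dots> = h n0 * exp (- (\<Sum>k\<in>{n0..<Suc n}. a k))"
    using step(1) by (simp add: exp_add[symmetric])
  finally show ?case .
qed

lemma contraction_tendsto_zero:
  fixes h a :: "nat \<Rightarrow> real"
  assumes nonneg: "\<And>n. 0 \<le> h n"
    and step: "\<And>n. n \<ge> n0 \<Longrightarrow> h (Suc n) \<le> (1 - a n) * h n"
    and div: "filterlim (\<lambda>n. \<Sum>k<n. a k) at_top sequentially"
  shows "h \<longlonglongrightarrow> 0"
proof (rule Lim_null_comparison)
  have "filterlim (\<lambda>n. (\<Sum>k<n. a k) - (\<Sum>k<n0. a k)) at_top sequentially"
    using filterlim_tendsto_add_at_top[OF tendsto_const div, of "- (\<Sum>k<n0. a k)"] by simp
  then have "((\<lambda>n. h n0 * exp (- ((\<Sum>k<n. a k) - (\<Sum>k<n0. a k)))) \<longlongrightarrow> h n0 * 0) sequentially"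
    by (intro tendsto_mult tendsto_const filterlim_compose[OF exp_at_bot]) (simp add: filterlim_uminus_at_bot)
  then show "((\<lambda>n. h n0 * exp (- ((\<Sum>k<n. a k) - (\<Sum>k<n0. a k)))) \<longlongrightarrow> 0) sequentially"
    by simp
  have bound: "norm (h n) \<le> h n0 * exp (- ((\<Sum>k<n. a k) - (\<Sum>k<n0. a k)))" if "n \<ge> n0" for n
    using contraction_le_exp_sum[of h n0 a n, OF nonneg step that] nonneg[of n] that
    by (simp add: sum_diff_nat_ivl[of 0, simplified atLeast0LessThan, symmetric] atLeast0LessThan)
  show "\<forall>\<^sub>F n in sequentially. norm (h n) \<le> h n0 * exp (- ((\<Sum>k<n. a k) - (\<Sum>k<n0. a k)))"
    by (rule eventually_mono[OF eventually_ge_at_top[of n0] bound])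
qed

lemma averaging_recursion_tendsto_zero:
  fixes E u a :: "nat \<Rightarrow> real"
  assumes a: "\<And>n. 0 \<le> a n" "\<And>n. a n \<le> 1"
    and rec: "\<And>n. E (Suc n) = (1 - a n) * E n + a n * u n"
    and u: "u \<longlonglongrightarrow> 0"
    and div: "filterlim (\<lambda>n. \<Sum>k<n. a k) at_top sequentially"
  shows "E \<longlonglongrightarrow> 0"
proof (rule LIMSEQ_I)
  fix e :: real assume "0 < e"
  then obtain n0 where n0: "\<And>n. n \<ge> n0 \<Longrightarrow> \<bar>u n\<bar> < e / 2"
    using LIMSEQ_D[OF u, of "e / 2"] by auto
  define h where "h n = max (\<bar>E n\<bar> - e / 2) 0" for n
  have "h (Suc n) \<le> (1 - a n) * h n" if "n \<ge> n0" for n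
  proof -
    have "\<bar>E (Suc n)\<bar> \<le> (1 - a n) * \<bar>E n\<bar> + a n * \<bar>u n\<bar>"
      using a[of n] abs_triangle_ineq[of "(1 - a n) * E n" "a n * u n"]
      by (simp add: rec abs_mult)
    also have "\<dots> \<le> (1 - a n) * \<bar>E n\<bar> + a n * (e / 2)"
      using n0[OF that] a[of n] by (intro add_left_mono mult_left_mono) auto
    finally have "\<bar>E (Suc n)\<bar> - e / 2 \<le> (1 - a n) * (\<bar>E n\<bar> - e / 2)"
      by (simp add: algebra_simps add_divide_distrib diff_divide_distrib)
    also have "\<dots> \<le> (1 - a n) * h n"
      using a[of n] by (intro mult_left_mono) (auto simp: h_def)
    finally show ?thesis
      using a[of n] by (simp add: h_def)
  qed
  then have "h \<longlonglongrightarrow> 0"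
    by (intro contraction_tendsto_zero[OF _ _ div]) (auto simp: h_def)
  then obtain m where m: "\<And>n. n \<ge> m \<Longrightarrow> \<bar>h n\<bar> < e / 2"
    using LIMSEQ_D[of h 0 "e / 2"] \<open>0 < e\<close> by auto
  then have "\<bar>E n\<bar> < e" if "n \<ge> m" for n
    using m[OF that] by (simp add: h_def max_def split: if_splits)
  then show "\<exists>m. \<forall>n\<ge>m. norm (E n - 0) < e"
    by auto
qed

lemma summable_perturbed_recursion_tendsto_zero:
  fixes D x a :: "nat \<Rightarrow> real"
  assumes a: "\<And>n. 0 \<le> a n" "\<And>n. a n \<le> 1"
    and rec: "\<And>n. D (Suc n) = (1 - a n) * D n + x n"
    and x: "summable x"
    and div: "filterlim (\<lambda>n. \<Sum>k<n. a k) at_top sequentially"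
  shows "D \<longlonglongrightarrow> 0"
proof -
  define T where "T n = suminf x - (\<Sum>j<n. x j)" for n
  have "T \<longlonglongrightarrow> suminf x - suminf x"
    unfolding T_def by (intro tendsto_diff tendsto_const summable_LIMSEQ x)
  then have T_lim: "T \<longlonglongrightarrow> 0"
    by simp
  \<comment> \<open>Absorbing the remainder of the series turns the recursion into an averaging one.\<close>
  have "(\<lambda>n. D n + T n) \<longlonglongrightarrow> 0"
    by (rule averaging_recursion_tendsto_zero[OF a _ T_lim div]) (simp add: rec T_def algebra_simps)
  from tendsto_diff[OF this T_lim] show ?thesis
    by simp
qed

lemma summable_if_tail_sums_small:
  fixes f :: "nat \<Rightarrow> real"
  assumes "\<And>e. 0 < e \<Longrightarrow> \<exists>k. \<forall>m\<ge>k. \<bar>\<Sum>j\<in>{k..<m}. f j\<bar> < e"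
  shows "summable f"
  unfolding summable_Cauchy
proof (intro allI impI)
  fix e :: real assume "0 < e"
  then obtain k where k: "\<And>m. m \<ge> k \<Longrightarrow> \<bar>\<Sum>j\<in>{k..<m}. f j\<bar> < e / 2"
    using assms[of "e / 2"] by auto
  have "norm (\<Sum>j\<in>{m..<n}. f j) < e" if "m \<ge> k" for m n
  proof (cases "m \<le> n")
    case True
    then have "(\<Sum>j\<in>{m..<n}. f j) = (\<Sum>j\<in>{k..<n}. f j) - (\<Sum>j\<in>{k..<m}. f j)"
      using that sum.atLeastLessThan_concat[of k m n f] by simp
    moreover have "\<bar>\<Sum>j\<in>{k..<n}. f j\<bar> < e / 2" "\<bar>\<Sum>j\<in>{k..<m}. f j\<bar> < e / 2"
      using k True that by auto
    ultimately show ?thesis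
      unfolding real_norm_def by linarith
  qed (use \<open>0 < e\<close> in simp)
  then show "\<exists>N. \<forall>m\<ge>N. \<forall>n. norm (sum f {m..<n}) < e"
    by blast
qed

lemma (in finite_measure) integrable_bounded:
  fixes f :: "'a \<Rightarrow> real"
  assumes "f \<in> borel_measurable M" "\<And>w. w \<in> space M \<Longrightarrow> \<bar>f w\<bar> \<le> B"
  shows "integrable M f"
  using assms by (intro integrable_const_bound[where B=B]) auto

lemma (in finite_measure) integrable_bounded_mult:
  fixes u v :: "'a \<Rightarrow> real"
  assumes "u \<in> borel_measurable M" "v \<in> borel_measurable M"
    and u: "\<And>w. w \<in> space M \<Longrightarrow> \<bar>u w\<bar> \<le> Bu" and v: "\<And>w. w \<in> space M \<Longrightarrow> \<bar>v w\<bar> \<le> Bv"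
  shows "integrable M (\<lambda>w. u w * v w)"
proof (rule integrable_bounded[where B="Bu * Bv"])
  fix w assume "w \<in> space M"
  then show "\<bar>u w * v w\<bar> \<le> Bu * Bv"
    using u[of w] v[of w] by (simp add: abs_mult mult_mono')
qed (use assms in simp)

lemma (in finite_measure) integral_square_add_orthogonal:
  fixes u v :: "'a \<Rightarrow> real"
  assumes [measurable]: "u \<in> borel_measurable M" "v \<in> borel_measurable M"
    and u: "\<And>w. w \<in> space M \<Longrightarrow> \<bar>u w\<bar> \<le> Bu" and v: "\<And>w. w \<in> space M \<Longrightarrow> \<bar>v w\<bar> \<le> Bv"
    and orthogonal: "(\<integral>w. u w * v w \<partial>M) = 0"
  shows "(\<integral>w. (u w + v w)\<^sup>2 \<partial>M) = (\<integral>w. (u w)\<^sup>2 \<partial>M) + (\<integral>w. (v w)\<^sup>2 \<partial>M)"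
proof -
  note integrable_bounded_mult[OF assms(1,1) u u] integrable_bounded_mult[OF assms(2,2) v v]
    integrable_bounded_mult[OF assms(1,2) u v]
  then have "integrable M (\<lambda>w. (u w)\<^sup>2)" "integrable M (\<lambda>w. (v w)\<^sup>2)" "integrable M (\<lambda>w. 2 * (u w * v w))"
    by (auto simp: power2_eq_square)
  then show ?thesis
    using orthogonal by (simp add: power2_sum mult.assoc)
qed

locale bounded_martingale_differences = prob_space M
  for M :: "'a measure" +
  fixes G :: "nat \<Rightarrow> 'a measure" and x :: "nat \<Rightarrow> 'a \<Rightarrow> real" and b :: "nat \<Rightarrow> real"
  assumes subalgebra: "\<And>n. subalgebra M (G n)"
    and filtration: "\<And>n m. n \<le> m \<Longrightarrow> subalgebra (G m) (G n)"
    and adapted: "\<And>n. x n \<in> borel_measurable (G (Suc n))"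
    and bounded: "\<And>n w. w \<in> space M \<Longrightarrow> \<bar>x n w\<bar> \<le> b n"
    and square_summable: "summable (\<lambda>n. (b n)\<^sup>2)"
    \<comment> \<open>the weak form of E[x n | G n] = 0\<close>
    and orthogonal: "\<And>n g B. g \<in> borel_measurable (G n) \<Longrightarrow> (\<And>w. w \<in> space M \<Longrightarrow> \<bar>g w\<bar> \<le> B)
          \<Longrightarrow> (\<integral>w. g w * x n w \<partial>M) = 0"
begin

definition partial_sum :: "nat \<Rightarrow> nat \<Rightarrow> 'a \<Rightarrow> real" where
  "partial_sum k m w = (\<Sum>j\<in>{k..<m}. x j w)"

lemma space_G: "space (G n) = space M"
  using subalgebra[of n] by (simp add: subalgebra_def)

lemma measurable_G_mono: "f \<in> borel_measurable (G n) \<Longrightarrow> n \<le> m \<Longrightarrow> f \<in> borel_measurable (G m)"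
  by (rule measurable_from_subalg[OF filtration])

lemma measurable_G_M: "f \<in> borel_measurable (G n) \<Longrightarrow> f \<in> borel_measurable M"
  by (rule measurable_from_subalg[OF subalgebra])

lemma partial_sum_measurable_G: "m \<le> n \<Longrightarrow> partial_sum k m \<in> borel_measurable (G n)"
  unfolding partial_sum_def
  by (intro borel_measurable_sum measurable_G_mono[OF adapted]) auto

lemma partial_sum_measurable [measurable]: "partial_sum k m \<in> borel_measurable M"
  using measurable_G_M[OF partial_sum_measurable_G[OF order_refl]] .

lemma x_measurable [measurable]: "x n \<in> borel_measurable M"
  using measurable_G_M[OF adapted] .

lemma partial_sum_bounded: "w \<in> space M \<Longrightarrow> \<bar>partial_sum k m w\<bar> \<le> (\<Sum>j\<in>{k..<m}. b j)"
  unfolding partial_sum_def using bounded by (intro order_trans[OF sum_abs sum_mono])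

lemma partial_sum_split: "k \<le> m \<Longrightarrow> m \<le> n \<Longrightarrow> partial_sum k n w = partial_sum k m w + partial_sum m n w"
  unfolding partial_sum_def by (simp add: sum.atLeastLessThan_concat)

lemma integral_mult_partial_sum:
  assumes "g \<in> borel_measurable (G m)" "\<And>w. w \<in> space M \<Longrightarrow> \<bar>g w\<bar> \<le> B"
  shows "(\<integral>w. g w * partial_sum m n w \<partial>M) = 0"
proof -
  have [measurable]: "g \<in> borel_measurable M"
    using measurable_G_M[OF assms(1)] .
  have "(\<integral>w. g w * partial_sum m n w \<partial>M) = (\<Sum>j\<in>{m..<n}. \<integral>w. g w * x j w \<partial>M)"
    unfolding partial_sum_def sum_distrib_left
  proof (rule Bochner_Integration.integral_sum)
    show "integrable M (\<lambda>w. g w * x j w)" for j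
      by (rule integrable_bounded_mult[OF _ _ assms(2) bounded]) auto
  qed
  also have "\<dots> = 0"
    using assms by (intro sum.neutral ballI orthogonal[of _ _ B] measurable_G_mono[OF assms(1)]) auto
  finally show ?thesis .
qed

lemma integral_partial_sum_square_le: "(\<integral>w. (partial_sum k m w)\<^sup>2 \<partial>M) \<le> (\<Sum>j\<in>{k..<m}. (b j)\<^sup>2)"
proof (cases "k \<le> m")
  case True
  then show ?thesis
  proof (induction m rule: dec_induct)
    case base then show ?case by (simp add: partial_sum_def)
  next
    case (step m)
    have "(\<integral>w. (partial_sum k (Suc m) w)\<^sup>2 \<partial>M) = (\<integral>w. (partial_sum k m w + x m w)\<^sup>2 \<partial>M)"
      using step(1) by (simp add: partial_sum_def)
    also have "\<dots> = (\<integral>w. (partial_sum k m w)\<^sup>2 \<partial>M) + (\<integral>w. (x m w)\<^sup>2 \<partial>M)"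
      by (intro integral_square_add_orthogonal orthogonal partial_sum_measurable_G)
        (auto intro: partial_sum_bounded bounded)
    also have "(\<integral>w. (x m w)\<^sup>2 \<partial>M) \<le> (\<integral>w. (b m)\<^sup>2 \<partial>M)"
    proof (rule integral_mono)
      show "integrable M (\<lambda>w. (x m w)\<^sup>2)"
        unfolding power2_eq_square by (rule integrable_bounded_mult[OF _ _ bounded bounded]) auto
      show "(x m w)\<^sup>2 \<le> (b m)\<^sup>2" if "w \<in> space M" for w
        using bounded[OF that, of m] abs_le_square_iff[of "x m w" "b m"] by simp
    qed simp
    finally show ?case
      using step(1,3) by (simp add: prob_space)
  qed
qed (simp add: partial_sum_def)

definition first_passage :: "nat \<Rightarrow> real \<Rightarrow> nat \<Rightarrow> 'a set" where
  "first_passage k l m =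
     {w \<in> space M. l \<le> \<bar>partial_sum k m w\<bar> \<and> (\<forall>j\<in>{k..<m}. \<bar>partial_sum k j w\<bar> < l)}"

lemma first_passage_in_G: "first_passage k l m \<in> sets (G m)"
proof -
  have [measurable]: "partial_sum k j \<in> borel_measurable (G m)" if "j \<le> m" for j
    using partial_sum_measurable_G[OF that] .
  have "{w \<in> space (G m). l \<le> \<bar>partial_sum k m w\<bar>} \<in> sets (G m)"
    by measurable
  moreover have "{w \<in> space (G m). \<forall>j\<in>{k..<m}. \<bar>partial_sum k j w\<bar> < l} \<in> sets (G m)"
    by (rule sets.sets_Collect_finite_All) auto
  moreover have "first_passage k l m = {w \<in> space (G m). l \<le> \<bar>partial_sum k m w\<bar>}
      \<inter> {w \<in> space (G m). \<forall>j\<in>{k..<m}. \<bar>partial_sum k j w\<bar> < l}"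
    by (auto simp: first_passage_def space_G)
  ultimately show ?thesis
    by (simp add: sets.Int)
qed

lemma first_passage_in_M: "first_passage k l m \<in> sets M"
  using first_passage_in_G[of k l m] subalgebra[of m] by (auto simp: subalgebra_def)

lemma disjoint_family_first_passage: "disjoint_family_on (first_passage k l) {k..}"
  unfolding disjoint_family_on_def first_passage_def
  by (auto simp: linorder_neq_iff) (meson atLeastLessThan_iff not_le)+

lemma UN_first_passage:
  "{w \<in> space M. \<exists>m\<in>{k..n}. l \<le> \<bar>partial_sum k m w\<bar>} = (\<Union>m\<in>{k..n}. first_passage k l m)"
proof (intro equalityI subsetI)
  fix w assume "w \<in> {w \<in> space M. \<exists>m\<in>{k..n}. l \<le> \<bar>partial_sum k m w\<bar>}"
  then have w: "w \<in> space M" and ex: "\<exists>m. m \<in> {k..n} \<and> l \<le> \<bar>partial_sum k m w\<bar>"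
    by auto
  define m where "m = (LEAST m. m \<in> {k..n} \<and> l \<le> \<bar>partial_sum k m w\<bar>)"
  have m: "m \<in> {k..n} \<and> l \<le> \<bar>partial_sum k m w\<bar>"
    unfolding m_def using ex by (rule LeastI_ex)
  have "\<bar>partial_sum k j w\<bar> < l" if "j \<in> {k..<m}" for j
    using not_less_Least[of j "\<lambda>m. m \<in> {k..n} \<and> l \<le> \<bar>partial_sum k m w\<bar>"] that m
    unfolding m_def[symmetric] by auto
  with w m show "w \<in> (\<Union>m\<in>{k..n}. first_passage k l m)"
    by (auto simp: first_passage_def)
qed (auto simp: first_passage_def)

lemma first_passage_le_integral:
  assumes "k \<le> m" "m \<le> n" "0 \<le> l"
  shows "l\<^sup>2 * prob (first_passage k l m) \<le> (\<integral>w. indicator (first_passage k l m) w * (partial_sum k n w)\<^sup>2 \<partial>M)"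
proof -
  define A where "A = first_passage k l m"
  have A_M [measurable]: "A \<in> sets M"
    unfolding A_def by (rule first_passage_in_M)
  define u where "u w = indicator A w * partial_sum k m w" for w
  define v where "v w = indicator A w * partial_sum m n w" for w
  have u_bounded: "\<bar>u w\<bar> \<le> (\<Sum>j\<in>{k..<m}. b j)" and v_bounded: "\<bar>v w\<bar> \<le> (\<Sum>j\<in>{m..<n}. b j)"
    if "w \<in> space M" for w
    using partial_sum_bounded[OF that] bounded[OF that] order_trans[OF abs_ge_zero partial_sum_bounded[OF that]]
    by (auto simp: u_def v_def indicator_def)
  have u_G: "u \<in> borel_measurable (G m)"
    unfolding u_def using first_passage_in_G[of k l m] partial_sum_measurable_G[of m m k]
    by (simp add: A_def borel_measurable_indicator)
  have "l\<^sup>2 * prob A = (\<integral>w. indicator A w * l\<^sup>2 \<partial>M)"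
    by simp
  also have "\<dots> \<le> (\<integral>w. (u w)\<^sup>2 \<partial>M)"
  proof (rule integral_mono)
    show "integrable M (\<lambda>w. (u w)\<^sup>2)"
      unfolding power2_eq_square u_def by (rule integrable_bounded_mult[OF _ _ u_bounded u_bounded, unfolded u_def]) auto
    show "indicator A w * l\<^sup>2 \<le> (u w)\<^sup>2" for w
      using \<open>0 \<le> l\<close> by (auto simp: u_def A_def first_passage_def indicator_def abs_le_square_iff[symmetric])
  qed (simp add: A_M less_top[symmetric])
  also have "\<dots> \<le> (\<integral>w. (u w)\<^sup>2 \<partial>M) + (\<integral>w. (v w)\<^sup>2 \<partial>M)"
    by simp
  \<comment> \<open>the increments after time m are orthogonal to the G m-measurable u\<close>
  also have "\<dots> = (\<integral>w. (u w + v w)\<^sup>2 \<partial>M)"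
  proof (rule integral_square_add_orthogonal[symmetric, OF _ _ u_bounded v_bounded])
    have "(\<integral>w. u w * v w \<partial>M) = (\<integral>w. u w * partial_sum m n w \<partial>M)"
      by (rule Bochner_Integration.integral_cong) (auto simp: u_def v_def indicator_def)
    also have "\<dots> = 0"
      by (rule integral_mult_partial_sum[OF u_G u_bounded])
    finally show "(\<integral>w. u w * v w \<partial>M) = 0" .
  qed (auto simp: u_def v_def)
  also have "\<dots> = (\<integral>w. indicator A w * (partial_sum k n w)\<^sup>2 \<partial>M)"
    using partial_sum_split[OF assms(1,2)]
    by (intro Bochner_Integration.integral_cong) (auto simp: u_def v_def indicator_def)
  finally show ?thesis
    by (simp add: A_def)
qed

lemma kolmogorov_maximal_inequality:
  assumes "0 \<le> l"
  shows "l\<^sup>2 * prob {w \<in> space M. \<exists>m\<in>{k..n}. l \<le> \<bar>partial_sum k m w\<bar>} \<le> (\<integral>w. (partial_sum k n w)\<^sup>2 \<partial>M)"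
proof -
  define A where "A = first_passage k l"
  define E where "E = (\<Union>m\<in>{k..n}. A m)"
  have A_M [measurable]: "A m \<in> sets M" for m
    unfolding A_def by (rule first_passage_in_M)
  have disjoint: "disjoint_family_on A {k..n}"
    unfolding A_def by (rule disjoint_family_on_mono[OF _ disjoint_family_first_passage]) auto
  have S_sq_integrable: "integrable M (\<lambda>w. f w * (partial_sum k n w)\<^sup>2)"
    if f: "f \<in> borel_measurable M" "\<And>w. w \<in> space M \<Longrightarrow> \<bar>f w\<bar> \<le> 1" for f
  proof -
    have "\<bar>f w * partial_sum k n w\<bar> \<le> 1 * (\<Sum>j\<in>{k..<n}. b j)" if "w \<in> space M" for w
      unfolding abs_mult using f(2)[OF that] partial_sum_bounded[OF that] by (rule mult_mono) auto
    then show ?thesis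
      unfolding power2_eq_square mult.assoc[symmetric]
      by (intro integrable_bounded_mult[OF _ _ _ partial_sum_bounded]) (use f in auto)
  qed
  have "l\<^sup>2 * prob E = (\<Sum>m\<in>{k..n}. l\<^sup>2 * prob (A m))"
    unfolding E_def sum_distrib_left[symmetric]
    by (subst finite_measure_finite_Union[OF _ _ disjoint]) auto
  also have "\<dots> \<le> (\<Sum>m\<in>{k..n}. \<integral>w. indicator (A m) w * (partial_sum k n w)\<^sup>2 \<partial>M)"
    unfolding A_def using assms by (intro sum_mono first_passage_le_integral) auto
  also have "\<dots> = (\<integral>w. indicator E w * (partial_sum k n w)\<^sup>2 \<partial>M)"
    unfolding E_def indicator_UN_disjoint[OF finite_atLeastAtMost disjoint] sum_distrib_right
    by (rule Bochner_Integration.integral_sum[symmetric]) (auto intro: S_sq_integrable)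
  also have "\<dots> \<le> (\<integral>w. (partial_sum k n w)\<^sup>2 \<partial>M)"
  proof (rule integral_mono)
    show "integrable M (\<lambda>w. indicator E w * (partial_sum k n w)\<^sup>2)"
      by (rule S_sq_integrable) (auto simp: E_def)
    show "integrable M (\<lambda>w. (partial_sum k n w)\<^sup>2)"
      using S_sq_integrable[of "\<lambda>_. 1"] by simp
  qed (auto simp: indicator_def)
  finally show ?thesis
    by (simp add: E_def A_def UN_first_passage)
qed

lemma prob_partial_sum_exceeds_le:
  assumes "0 < l"
  shows "prob {w \<in> space M. \<exists>m\<ge>k. l \<le> \<bar>partial_sum k m w\<bar>}
    \<le> ((\<Sum>j. (b j)\<^sup>2) - (\<Sum>j<k. (b j)\<^sup>2)) / l\<^sup>2"
proof -
  define U where "U n = {w \<in> space M. \<exists>m\<in>{k..k + n}. l \<le> \<bar>partial_sum k m w\<bar>}" for n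
  have "(\<lambda>n. prob (U n)) \<longlonglongrightarrow> prob (\<Union>n. U n)"
    by (rule finite_Lim_measure_incseq) (auto simp: U_def incseq_def)
  moreover have "(\<Union>n. U n) = {w \<in> space M. \<exists>m\<ge>k. l \<le> \<bar>partial_sum k m w\<bar>}"
    by (auto simp: U_def) (metis le_add_diff_inverse atLeastAtMost_iff le_refl)
  moreover have "prob (U n) \<le> ((\<Sum>j. (b j)\<^sup>2) - (\<Sum>j<k. (b j)\<^sup>2)) / l\<^sup>2" for n
  proof -
    have "l\<^sup>2 * prob (U n) \<le> (\<integral>w. (partial_sum k (k + n) w)\<^sup>2 \<partial>M)"
      unfolding U_def using assms by (intro kolmogorov_maximal_inequality) simp
    also have "\<dots> \<le> (\<Sum>j\<in>{k..<k + n}. (b j)\<^sup>2)"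
      by (rule integral_partial_sum_square_le)
    also have "\<dots> = (\<Sum>j<k + n. (b j)\<^sup>2) - (\<Sum>j<k. (b j)\<^sup>2)"
      by (simp add: sum_diff_nat_ivl[of 0, symmetric] atLeast0LessThan)
    also have "\<dots> \<le> (\<Sum>j. (b j)\<^sup>2) - (\<Sum>j<k. (b j)\<^sup>2)"
      using sum_le_suminf[OF square_summable, of "{..<k + n}"] by simp
    finally show ?thesis
      using assms by (simp add: field_simps)
  qed
  ultimately show ?thesis
    by (intro LIMSEQ_le_const2) auto
qed

lemma AE_partial_sums_eventually_small:
  assumes "0 < l"
  shows "AE w in M. \<exists>k. \<forall>m\<ge>k. \<bar>partial_sum k m w\<bar> < l"
proof -
  define B where "B = {w \<in> space M. \<forall>k. \<exists>m\<ge>k. l \<le> \<bar>partial_sum k m w\<bar>}"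
  have B_M: "B \<in> sets M"
    unfolding B_def by measurable
  have "prob B \<le> ((\<Sum>j. (b j)\<^sup>2) - (\<Sum>j<k. (b j)\<^sup>2)) / l\<^sup>2" for k
    by (rule order_trans[OF finite_measure_mono prob_partial_sum_exceeds_le[OF assms]]) (auto simp: B_def)
  moreover have "(\<lambda>k. ((\<Sum>j. (b j)\<^sup>2) - (\<Sum>j<k. (b j)\<^sup>2)) / l\<^sup>2) \<longlonglongrightarrow> ((\<Sum>j. (b j)\<^sup>2) - (\<Sum>j. (b j)\<^sup>2)) / l\<^sup>2"
    using assms by (intro tendsto_intros summable_LIMSEQ square_summable) simp
  ultimately have "prob B \<le> 0"
    by (intro LIMSEQ_le_const) auto
  then have "B \<in> null_sets M"
    using B_M measure_nonneg[of M B] by (simp add: emeasure_eq_measure null_sets_def)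
  from AE_not_in[OF this] AE_space show ?thesis
    by eventually_elim (auto simp: B_def; meson not_le)
qed

lemma AE_summable: "AE w in M. summable (\<lambda>n. x n w)"
proof -
  have "AE w in M. \<forall>p. \<exists>k. \<forall>m\<ge>k. \<bar>partial_sum k m w\<bar> < 1 / Suc p"
    by (simp only: AE_all_countable) (auto intro: AE_partial_sums_eventually_small)
  then show ?thesis
  proof eventually_elim
    case (elim w)
    show ?case
    proof (rule summable_if_tail_sums_small)
      fix e :: real assume "0 < e"
      then obtain p where "1 / Suc p < e"
        using nat_approx_posE by blast
      with elim show "\<exists>k. \<forall>m\<ge>k. \<bar>\<Sum>j\<in>{k..<m}. x j w\<bar> < e"
        unfolding partial_sum_def by (meson less_trans)
    qed
  qed
qed

end

lemma sets_nat_filtr: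
  "sets (nat_filtr M N Z n) =
     sigma_sets (space M) {Z k i -` B \<inter> space M | k i B. k \<le> n \<and> i \<in> {1..N} \<and> B \<in> sets borel}"
  unfolding nat_filtr_def by (rule sets_measure_of) auto

lemma space_nat_filtr: "space (nat_filtr M N Z n) = space M"
  unfolding nat_filtr_def by (rule space_measure_of) auto

lemma subalgebra_nat_filtr:
  assumes "\<And>k i. i \<in> {1..N} \<Longrightarrow> Z k i \<in> borel_measurable M"
  shows "subalgebra M (nat_filtr M N Z n)"
  unfolding subalgebra_def sets_nat_filtr space_nat_filtr
  using assms by (auto intro!: sets.sigma_sets_subset measurable_sets)

lemma subalgebra_nat_filtr_mono: "n \<le> m \<Longrightarrow> subalgebra (nat_filtr M N Z m) (nat_filtr M N Z n)"
  unfolding subalgebra_def sets_nat_filtr space_nat_filtr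
  by (auto intro!: sigma_sets_mono' intro: order_trans)

lemma measurable_nat_filtr:
  assumes "k \<le> n" "i \<in> {1..N}"
  shows "Z k i \<in> borel_measurable (nat_filtr M N Z n)"
proof (rule measurableI)
  fix B :: "real set" assume "B \<in> sets borel"
  with assms show "Z k i -` B \<inter> space (nat_filtr M N Z n) \<in> sets (nat_filtr M N Z n)"
    unfolding sets_nat_filtr space_nat_filtr by blast
qed simp

lemma (in prob_space) integral_mult_cond_prob_residual:
  assumes F: "subalgebra M F"
    and A: "A \<in> sets M"
    and p [measurable]: "p \<in> borel_measurable M" "AE w in M. cond_prob_given M F A w = p w"
    and g: "g \<in> borel_measurable F" "\<And>w. w \<in> space M \<Longrightarrow> \<bar>g w\<bar> \<le> B"
  shows "(\<integral>w. g w * (indicator A w - p w) \<partial>M) = 0"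
proof -
  interpret sigma_finite_subalgebra M F
    by (rule finite_measure_subalgebra_is_sigma_finite) (unfold_locales, rule F)
  have [measurable]: "g \<in> borel_measurable M"
    by (rule measurable_from_subalg[OF F g(1)])
  have gA: "integrable M (\<lambda>w. g w * indicator A w)"
    using A g(2) by (intro integrable_bounded_mult[where Bv=1]) (auto simp: indicator_def)
  have cond: "AE w in M. g w * real_cond_exp M F (indicator A) w = g w * p w"
    using p(2) by eventually_elim (simp add: cond_prob_given_def)
  have gp: "integrable M (\<lambda>w. g w * p w)"
    using real_cond_exp_intg(1)[OF gA g(1)] A by (simp add: integrable_cong_AE[OF _ _ cond])
  have "(\<integral>w. g w * p w \<partial>M) = (\<integral>w. g w * indicator A w \<partial>M)"
    using real_cond_exp_intg(2)[OF gA g(1)] A by (simp add: integral_cong_AE[OF _ _ cond])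
  with gA gp show ?thesis
    by (simp add: right_diff_distrib)
qed

definition average :: "nat \<Rightarrow> (nat \<Rightarrow> real) \<Rightarrow> real" where
  "average N f = (1 / real N) * (\<Sum>i=1..N. f i)"

lemma average_affine:
  assumes "N \<ge> 1"
  shows "average N (\<lambda>i. a * f i + b * g i + c) = a * average N f + b * average N g + c"
  using assms by (simp add: average_def sum.distrib sum_distrib_left[symmetric] field_simps)

lemma average_bounds:
  assumes "N \<ge> 1" "\<And>i. i \<in> {1..N} \<Longrightarrow> f i \<in> {lo..hi}"
  shows "average N f \<in> {lo..hi}"
proof -
  have "real N * lo \<le> (\<Sum>i=1..N. f i)" "(\<Sum>i=1..N. f i) \<le> real N * hi"
    using sum_mono[of "{1..N}" "\<lambda>_. lo" f] sum_mono[of "{1..N}" f "\<lambda>_. hi"] assms(2) by auto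
  with assms(1) show ?thesis
    by (simp add: average_def field_simps)
qed

lemma deviation_from_average_step:
  fixes z z' \<iota> h :: "nat \<Rightarrow> real"
  assumes "N \<ge> 1" "i \<in> {1..N}"
    and step: "\<And>j. j \<in> {1..N} \<Longrightarrow> z' j = (1 - s) * z j + s * (\<rho> * \<iota> j + (1 - \<rho>) * q)"
    and h: "\<And>j. h j = \<iota> j - ((1 - \<alpha>) * z j + \<alpha> * average N z)"
  shows "z' i - average N z' =
    (1 - (1 - \<rho> * (1 - \<alpha>)) * s) * (z i - average N z) + s * \<rho> * (h i - average N h)"
proof -
  have "average N z' = average N (\<lambda>j. (1 - s) * z j + (s * \<rho>) * \<iota> j + s * (1 - \<rho>) * q)"
    unfolding average_def using step by (intro arg_cong[where f="\<lambda>x. _ * x"] sum.cong) (simp_all add: algebra_simps)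
  also have "\<dots> = (1 - s) * average N z + s * \<rho> * average N \<iota> + s * (1 - \<rho>) * q"
    by (rule average_affine[OF assms(1)])
  finally have z': "average N z' = \<dots>" .
  have "average N h = average N (\<lambda>j. 1 * \<iota> j + (\<alpha> - 1) * z j + - (\<alpha> * average N z))"
    unfolding h by (simp add: algebra_simps)
  also have "\<dots> = average N \<iota> - average N z"
    unfolding average_affine[OF assms(1)] by (simp add: algebra_simps)
  finally have h_average: "average N h = average N \<iota> - average N z" .
  show ?thesis
    unfolding z' h_average h[of i] step[OF assms(2)] by (simp add: algebra_simps)
qed

locale interacting_reinforced_processes = prob_space M
  for M :: "'a measure" +
  fixes N :: nat and \<rho> \<alpha> q :: real and r :: "nat \<Rightarrow> real"
    and Z I :: "nat \<Rightarrow> nat \<Rightarrow> 'a \<Rightarrow> real" and F :: "nat \<Rightarrow> 'a measure"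
  assumes N: "N \<ge> 1"
    and \<rho>: "0 \<le> \<rho>" "\<rho> \<le> 1" and \<alpha>: "0 \<le> \<alpha>" "\<alpha> \<le> 1"
    and r: "\<And>n. 0 \<le> r n" "\<And>n. r n \<le> 1"
    and subalgebra_F: "\<And>n. subalgebra M (F n)"
    and filtration_F: "\<And>n m. n \<le> m \<Longrightarrow> subalgebra (F m) (F n)"
    and Z_adapted: "\<And>n i. i \<in> {1..N} \<Longrightarrow> Z n i \<in> borel_measurable (F n)"
    and Z_range: "\<And>n i w. i \<in> {1..N} \<Longrightarrow> w \<in> space M \<Longrightarrow> Z n i w \<in> {0..1}"
    and I_meas: "\<And>n i. i \<in> {1..N} \<Longrightarrow> I (Suc n) i \<in> borel_measurable M"
    and I_range: "\<And>n i w. i \<in> {1..N} \<Longrightarrow> w \<in> space M \<Longrightarrow> I (Suc n) i w \<in> {0, 1}"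
    and recursion: "\<And>n i w. i \<in> {1..N} \<Longrightarrow> w \<in> space M \<Longrightarrow>
          Z (Suc n) i w = (1 - r n) * Z n i w + r n * (\<rho> * I (Suc n) i w + (1 - \<rho>) * q)"
    and I_cond_prob: "\<And>n i. i \<in> {1..N} \<Longrightarrow>
          AE w in M. cond_prob_given M (F n) {w \<in> space M. I (Suc n) i w = 1} w
                     = (1 - \<alpha>) * Z n i w + \<alpha> * average N (\<lambda>j. Z n j w)"
    and r_div: "filterlim (\<lambda>n. \<Sum>k<n. r k) at_top sequentially"
    and r_sq: "summable (\<lambda>n. (r n)\<^sup>2)"
    and \<rho>\<alpha>: "\<rho> * (1 - \<alpha>) < 1"
begin

definition innovation :: "nat \<Rightarrow> nat \<Rightarrow> 'a \<Rightarrow> real" where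
  "innovation n j w = I (Suc n) j w - ((1 - \<alpha>) * Z n j w + \<alpha> * average N (\<lambda>k. Z n k w))"

definition deviation :: "nat \<Rightarrow> nat \<Rightarrow> 'a \<Rightarrow> real" where
  "deviation i n w = Z n i w - average N (\<lambda>j. Z n j w)"

definition contraction_rate :: real where
  "contraction_rate = 1 - \<rho> * (1 - \<alpha>)"

definition deviation_noise :: "nat \<Rightarrow> nat \<Rightarrow> 'a \<Rightarrow> real" where
  "deviation_noise i n w = deviation i (Suc n) w - (1 - contraction_rate * r n) * deviation i n w"

lemma Z_measurable [measurable]: "i \<in> {1..N} \<Longrightarrow> Z n i \<in> borel_measurable M"
  by (rule measurable_from_subalg[OF subalgebra_F Z_adapted])

lemma average_Z_adapted: "k \<le> n \<Longrightarrow> (\<lambda>w. average N (\<lambda>j. Z k j w)) \<in> borel_measurable (F n)"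
  unfolding average_def
  by (intro borel_measurable_times borel_measurable_const borel_measurable_sum
      measurable_from_subalg[OF filtration_F Z_adapted]) auto

lemma average_Z_measurable [measurable]: "(\<lambda>w. average N (\<lambda>j. Z n j w)) \<in> borel_measurable M"
  by (rule measurable_from_subalg[OF subalgebra_F average_Z_adapted[OF order_refl]])

lemma reinforcement_probability_range:
  assumes "j \<in> {1..N}" "w \<in> space M"
  shows "(1 - \<alpha>) * Z n j w + \<alpha> * average N (\<lambda>k. Z n k w) \<in> {0..1}"
proof -
  have "average N (\<lambda>k. Z n k w) \<in> {0..1}"
    using Z_range assms(2) by (intro average_bounds[OF N]) auto
  with Z_range[OF assms] \<alpha> show ?thesis
    using convex_bound_le[of "Z n j w" 1 "average N (\<lambda>k. Z n k w)" "1 - \<alpha>" \<alpha>]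
    by (auto intro!: add_nonneg_nonneg)
qed

lemma innovation_bounded: "j \<in> {1..N} \<Longrightarrow> w \<in> space M \<Longrightarrow> \<bar>innovation n j w\<bar> \<le> 1"
  using reinforcement_probability_range[of j w n] I_range[of j w n] by (auto simp: innovation_def)

lemma integral_mult_innovation:
  assumes "j \<in> {1..N}" "g \<in> borel_measurable (F n)" "\<And>w. w \<in> space M \<Longrightarrow> \<bar>g w\<bar> \<le> B"
  shows "(\<integral>w. g w * innovation n j w \<partial>M) = 0"
proof -
  define A where "A = {w \<in> space M. I (Suc n) j w = 1}"
  have "A \<in> sets M"
    unfolding A_def using I_meas[OF assms(1)] by measurable
  have "(\<integral>w. g w * innovation n j w \<partial>M)
      = (\<integral>w. g w * (indicator A w - ((1 - \<alpha>) * Z n j w + \<alpha> * average N (\<lambda>k. Z n k w))) \<partial>M)"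
    using I_range[OF assms(1)] by (intro Bochner_Integration.integral_cong) (auto simp: innovation_def A_def indicator_def)
  also have "\<dots> = 0"
    using \<open>A \<in> sets M\<close> I_cond_prob[OF assms(1), of n] assms(1)
    by (intro integral_mult_cond_prob_residual[OF subalgebra_F _ _ _ assms(2,3)]) (auto simp: A_def)
  finally show ?thesis .
qed

lemma deviation_noise_eq:
  assumes "i \<in> {1..N}" "w \<in> space M"
  shows "deviation_noise i n w = r n * \<rho> * (innovation n i w - average N (\<lambda>j. innovation n j w))"
proof -
  have "Z (Suc n) i w - average N (\<lambda>j. Z (Suc n) j w)
      = (1 - contraction_rate * r n) * (Z n i w - average N (\<lambda>j. Z n j w))
        + r n * \<rho> * (innovation n i w - average N (\<lambda>j. innovation n j w))"
    unfolding contraction_rate_def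
    by (rule deviation_from_average_step[OF N assms(1) recursion[OF _ assms(2)]]) (simp_all add: innovation_def)
  then show ?thesis
    by (simp add: deviation_noise_def deviation_def)
qed

lemma deviation_noise_bounded:
  assumes "i \<in> {1..N}" "w \<in> space M"
  shows "\<bar>deviation_noise i n w\<bar> \<le> 2 * r n"
proof -
  have "\<bar>average N (\<lambda>j. innovation n j w)\<bar> \<le> 1"
    using average_bounds[OF N, of "\<lambda>j. innovation n j w" "-1" 1] innovation_bounded[OF _ assms(2)]
    by (auto simp: abs_le_iff)
  then have "\<bar>innovation n i w - average N (\<lambda>j. innovation n j w)\<bar> \<le> 2"
    using innovation_bounded[OF assms, of n] by linarith
  moreover have "\<bar>r n * \<rho>\<bar> \<le> r n"
    using r(1)[of n] \<rho> by (simp add: abs_mult mult_left_le)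
  ultimately have "\<bar>r n * \<rho>\<bar> * \<bar>innovation n i w - average N (\<lambda>j. innovation n j w)\<bar> \<le> r n * 2"
    using r(1)[of n] by (intro mult_mono) auto
  then show ?thesis
    unfolding deviation_noise_eq[OF assms] abs_mult by (simp add: mult.commute)
qed

lemma deviation_noise_adapted: "i \<in> {1..N} \<Longrightarrow> deviation_noise i n \<in> borel_measurable (F (Suc n))"
  unfolding deviation_noise_def deviation_def
  by (intro borel_measurable_diff borel_measurable_times borel_measurable_const average_Z_adapted
      measurable_from_subalg[OF filtration_F Z_adapted]) auto

lemma integral_mult_deviation_noise:
  assumes "i \<in> {1..N}" "g \<in> borel_measurable (F n)" "\<And>w. w \<in> space M \<Longrightarrow> \<bar>g w\<bar> \<le> B"
  shows "(\<integral>w. g w * deviation_noise i n w \<partial>M) = 0"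
proof -
  have [measurable]: "g \<in> borel_measurable M"
    by (rule measurable_from_subalg[OF subalgebra_F assms(2)])
  have innovation_measurable [measurable]: "innovation n j \<in> borel_measurable M" if "j \<in> {1..N}" for j
    unfolding innovation_def using I_meas[OF that] that by measurable
  have integrable: "integrable M (\<lambda>w. g w * innovation n j w)" if "j \<in> {1..N}" for j
    using that assms(3) innovation_bounded[OF that]
    by (intro integrable_bounded_mult[where Bu=B and Bv=1]) auto
  have sum_integrable: "integrable M (\<lambda>w. \<Sum>j=1..N. g w * innovation n j w)"
    by (intro Bochner_Integration.integrable_sum integrable)
  have "(\<integral>w. g w * deviation_noise i n w \<partial>M)
      = (\<integral>w. r n * \<rho> * (g w * innovation n i w - 1 / real N * (\<Sum>j=1..N. g w * innovation n j w)) \<partial>M)"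
    using assms(1) by (intro Bochner_Integration.integral_cong)
      (auto simp: deviation_noise_eq average_def sum_distrib_left algebra_simps)
  also have "\<dots> = r n * \<rho> * ((\<integral>w. g w * innovation n i w \<partial>M)
      - 1 / real N * (\<Sum>j=1..N. \<integral>w. g w * innovation n j w \<partial>M))"
    unfolding integral_mult_right_zero
    using integrable[OF assms(1)] sum_integrable integrable
    by (simp only: Bochner_Integration.integral_diff integrable_mult_right integral_mult_right_zero
        Bochner_Integration.integral_sum)
  also have "\<dots> = 0"
    using assms(1) by (simp add: integral_mult_innovation[OF _ assms(2,3)])
  finally show ?thesis .
qed

lemma deviation_noise_martingale_differences:
  "i \<in> {1..N} \<Longrightarrow> bounded_martingale_differences M F (deviation_noise i) (\<lambda>n. 2 * r n)"
proof unfold_locales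
  assume i: "i \<in> {1..N}"
  show "deviation_noise i n \<in> borel_measurable (F (Suc n))" for n
    using deviation_noise_adapted[OF i] .
  show "\<bar>deviation_noise i n w\<bar> \<le> 2 * r n" if "w \<in> space M" for n w
    using deviation_noise_bounded[OF i that] .
  show "(\<integral>w. g w * deviation_noise i n w \<partial>M) = 0"
    if "g \<in> borel_measurable (F n)" "\<And>w. w \<in> space M \<Longrightarrow> \<bar>g w\<bar> \<le> B" for n g B
    using integral_mult_deviation_noise[OF i that] .
  show "summable (\<lambda>n. (2 * r n)\<^sup>2)"
    using summable_mult[OF r_sq, of 4] by (simp add: power_mult_distrib)
qed (simp_all add: subalgebra_F filtration_F)

lemma AE_deviation_tendsto_zero:
  assumes "i \<in> {1..N}"
  shows "AE w in M. (\<lambda>n. deviation i n w) \<longlonglongrightarrow> 0"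
  using bounded_martingale_differences.AE_summable[OF deviation_noise_martingale_differences[OF assms]]
proof eventually_elim
  case (elim w)
  have rate: "0 < contraction_rate" "contraction_rate \<le> 1"
    using \<rho>\<alpha> \<rho> \<alpha> by (auto simp: contraction_rate_def)
  show ?case
  proof (rule summable_perturbed_recursion_tendsto_zero[OF _ _ _ elim])
    show "0 \<le> contraction_rate * r n" "contraction_rate * r n \<le> 1" for n
      using rate r[of n] by (auto intro: mult_le_one)
    show "filterlim (\<lambda>n. \<Sum>k<n. contraction_rate * r k) at_top sequentially"
      unfolding sum_distrib_left[symmetric] by (rule filterlim_tendsto_pos_mult_at_top[OF tendsto_const rate(1) r_div])
  qed (simp add: deviation_noise_def)
qed

end

theorem theorem2p3:
  fixes M :: "'a measure" and N :: nat and \<rho> \<alpha> q :: real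
    and r :: "nat \<Rightarrow> real"
    and Z :: "nat \<Rightarrow> nat \<Rightarrow> 'a \<Rightarrow> real"
    and I :: "nat \<Rightarrow> nat \<Rightarrow> 'a \<Rightarrow> real"
  defines "Zbar \<equiv> (\<lambda>n w. (1 / real N) * (\<Sum>i=1..N. Z n i w))"
  defines "F \<equiv> nat_filtr M N Z"
  assumes M: "prob_space M"
    and N: "N \<ge> 1"
    and \<rho>: "0 \<le> \<rho>" "\<rho> \<le> 1" and \<alpha>: "0 \<le> \<alpha>" "\<alpha> \<le> 1" and q: "0 \<le> q" "q \<le> 1"
    and r: "\<And>n. 0 \<le> r n" "\<And>n. r n < 1"
    and Z_meas: "\<And>n i. i \<in> {1..N} \<Longrightarrow> Z n i \<in> borel_measurable M"
    and Z_range: "\<And>n i w. i \<in> {1..N} \<Longrightarrow> w \<in> space M \<Longrightarrow> Z n i w \<in> {0..1}"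
    and I_meas: "\<And>n i. i \<in> {1..N} \<Longrightarrow> I n i \<in> borel_measurable M"
    and I_range: "\<And>n i w. i \<in> {1..N} \<Longrightarrow> w \<in> space M \<Longrightarrow> I n i w \<in> {0, 1}"
    and recursion: "\<And>n i w. i \<in> {1..N} \<Longrightarrow> w \<in> space M \<Longrightarrow>
          Z (Suc n) i w = (1 - r n) * Z n i w + r n * (\<rho> * I (Suc n) i w + (1 - \<rho>) * q)"
    and I_cond_indep: "\<And>n. cond_indep_vars M (F n) {1..N} (I (Suc n))"
    and I_cond_prob_given: "\<And>n i. i \<in> {1..N} \<Longrightarrow>
          AE w in M. cond_prob_given M (F n) {w \<in> space M. I (Suc n) i w = 1} w
                     = (1 - \<alpha>) * Z n i w + \<alpha> * Zbar n w"
    and r_div: "filterlim (\<lambda>n. \<Sum>k<n. r k) at_top sequentially"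
    and r_sq: "summable (\<lambda>n. (r n)\<^sup>2)"
    and \<rho>\<alpha>: "\<rho> * (1 - \<alpha>) < 1"
  shows "(\<forall>i\<in>{1..N}. AE w in M. (\<lambda>n. Z n i w - Zbar n w) \<longlonglongrightarrow> 0)
       \<and> (\<forall>Zlim :: 'a \<Rightarrow> real. (AE w in M. (\<lambda>n. Zbar n w) \<longlonglongrightarrow> Zlim w) \<longrightarrow>
            (\<forall>i\<in>{1..N}. AE w in M. (\<lambda>n. Z n i w) \<longlonglongrightarrow> Zlim w))"
proof -
  interpret prob_space M by (rule M)
  have Zbar: "Zbar n w = average N (\<lambda>i. Z n i w)" for n w
    by (simp add: Zbar_def average_def)
  interpret interacting_reinforced_processes M N \<rho> \<alpha> q r Z I F
  proof unfold_locales
    show "subalgebra M (F n)" for n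
      unfolding F_def by (rule subalgebra_nat_filtr[OF Z_meas])
    show "subalgebra (F m) (F n)" if "n \<le> m" for n m
      unfolding F_def using that by (rule subalgebra_nat_filtr_mono)
    show "Z n i \<in> borel_measurable (F n)" if "i \<in> {1..N}" for n i
      unfolding F_def using order_refl that by (rule measurable_nat_filtr)
    show "AE w in M. cond_prob_given M (F n) {w \<in> space M. I (Suc n) i w = 1} w
        = (1 - \<alpha>) * Z n i w + \<alpha> * average N (\<lambda>j. Z n j w)" if "i \<in> {1..N}" for n i
      using I_cond_prob_given[OF that] by (simp add: Zbar)
  qed (use N \<rho> \<alpha> r Z_range I_meas I_range recursion r_div r_sq \<rho>\<alpha> in \<open>auto intro: less_imp_le\<close>)
  have deviation: "AE w in M. (\<lambda>n. Z n i w - Zbar n w) \<longlonglongrightarrow> 0" if "i \<in> {1..N}" for i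
    using AE_deviation_tendsto_zero[OF that] by (simp add: deviation_def Zbar)
  show ?thesis
  proof (intro conjI ballI allI impI deviation)
    fix Zlim :: "'a \<Rightarrow> real" and i
    assume mean_limit: "AE w in M. (\<lambda>n. Zbar n w) \<longlonglongrightarrow> Zlim w" and i: "i \<in> {1..N}"
    from deviation[OF i] mean_limit show "AE w in M. (\<lambda>n. Z n i w) \<longlonglongrightarrow> Zlim w"
      by eventually_elim (use tendsto_add[where a=0] in fastforce)
  qed
qed

end
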